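(* Let $f:E\to\mathbb{R}$ be $L$-smooth and $\gamma$-weakly-quasi-convex with respect to a minimizer $x_*$, for some $\gamma\in(0,1]$. Then the iterates of Algorithm AGMsDR (either option) started at $x^0$ satisfy, for every $k\ge 0$, $$A_k\big(f(x^k)-f(x_* )\big)\le(1-\gamma)A_k\big(f(x^0)-f(x_* )\big)+V(x_*,x^0).$$
   Context: $E$ is a finite-dimensional real vector space with a norm $\|\cdot\|$; $E^*$ is its dual, $\langle g,x\rangle$ denotes the value of $g\in E^*$ at $x\in E$, and $\|g\|_*=\max\{\langle g,x\rangle:\|x\|\le 1\}$. For $g\in E^*$, $g^{\#}$ denotes a (fixed) element $s\in E$ with $\|s\|\le 1$ and $\langle g,s\rangle=\|g\|_*$. A prox-function $d:E\to\mathbb{R}$ is continuously differentiable, convex, $1$-strongly convex with respect to $\|\cdot\|$ (i.e. $d(y)-d(x)-\langle\nabla d(x),y-x\rangle\ge\frac12\|y-x\|^2$ for all $x,y\in E$) and satisfies $\min_E d=0$; its Bregman divergence is $V(x,z)=d(x)-d(z)-\langle\nabla d(z),x-z\rangle$. A function $f:E\to\mathbb{R}$ is $L$-smooth ($L>0$) if it is continuously differentiable and $\|\nabla f(x)-\nabla f(y)\|_*\le L\|x-y\|$ for all $x,y\in E$. A differentiable $f$ with a minimizer $x_*$ is $\gamma$-weakly-quasi-convex ($\gamma\in(0,1]$) if $\gamma(f(x)-f(x_* ))\le\langle\nabla f(x),x-x_*\rangle$ for all $x\in E$. Algorithm AGMsDR (input $x^0\in E$, and $L$ for Option (a)): set $A_0=0$,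 $v^0=x^0$, $\psi_0(x)=V(x,x^0)$. For $k=0,1,2,\dots$: 1. Choose $\beta_k\in\arg\min_{\beta\in[0,1]} f(v^k+\beta(x^k-v^k))$ (a global minimizer over the interval) and set $y^k=v^k+\beta_k(x^k-v^k)$. 2. Option (a): $x^{k+1}\in\arg\min_{x\in E}\{f(y^k)+\langle\nabla f(y^k),x-y^k\rangle+\frac L2\|x-y^k\|^2\}$, and $a_{k+1}>0$ solves $\frac{a_{k+1}^2}{A_k+a_{k+1}}=\frac1L$. Option (b): $h_{k+1}\in\arg\min_{h\ge0} f(y^k-h(\nabla f(y^k))^{\#})$, $x^{k+1}=y^k-h_{k+1}(\nabla f(y^k))^{\#}$, and $a_{k+1}$ is the largest solution of $f(y^k)-\frac{a_{k+1}^2}{2(A_k+a_{k+1})}\|\nabla f(y^k)\|_*^2=f(x^{k+1})$. 3. $A_{k+1}=A_k+a_{k+1}$; $\psi_{k+1}(x)=\psi_k(x)+a_{k+1}\{f(y^k)+\langle\nabla f(y^k),x-y^k\rangle\}$; $v^{k+1}=\arg\min_{x\in E}\psi_{k+1}(x)$. It is assumed that all the minima in the algorithm are attained, and that $\nabla f(y^k)\neq 0$ for all iterations considered (otherwise $y^k$ is a stationary point and the method stops). *)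

theory Defs
  imports "HOL-Analysis.Analysis"
begin

text \<open>The finite-dimensional space E is a type 'a :: euclidean_space. The paper's norm is an
arbitrary norm nrm on E (not the Euclidean one). The dual space E* is identified with E via
the inner product: a functional g is represented by the vector g, acting as g \<bullet> x.
Gradients are thus vectors gf x with derivative (\<lambda>h. gf x \<bullet> h).\<close>

definition is_norm :: "('a::real_vector \<Rightarrow> real) \<Rightarrow> bool" where
  "is_norm nrm \<longleftrightarrow>
     (\<forall>x. 0 \<le> nrm x) \<and> (\<forall>x. nrm x = 0 \<longleftrightarrow> x = 0) \<and>
     (\<forall>c x. nrm (c *\<^sub>R x) = \<bar>c\<bar> * nrm x) \<and>
     (\<forall>x y. nrm (x + y) \<le> nrm x + nrm y)"

definition dual_norm :: "('a::real_inner \<Rightarrow> real) \<Rightarrow> 'a \<Rightarrow> real" where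
  "dual_norm nrm g = Sup {g \<bullet> x | x. nrm x \<le> 1}"

definition has_cont_gradient :: "('a::euclidean_space \<Rightarrow> real) \<Rightarrow> ('a \<Rightarrow> 'a) \<Rightarrow> bool" where
  "has_cont_gradient f gf \<longleftrightarrow>
     (\<forall>x. (f has_derivative (\<lambda>h. gf x \<bullet> h)) (at x)) \<and> continuous_on UNIV gf"

definition L_smooth ::
  "('a::euclidean_space \<Rightarrow> real) \<Rightarrow> real \<Rightarrow> ('a \<Rightarrow> real) \<Rightarrow> ('a \<Rightarrow> 'a) \<Rightarrow> bool" where
  "L_smooth nrm L f gf \<longleftrightarrow> L > 0 \<and> has_cont_gradient f gf \<and>
     (\<forall>x y. dual_norm nrm (gf x - gf y) \<le> L * nrm (x - y))"

definition weakly_quasi_convex ::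
  "real \<Rightarrow> ('a::euclidean_space \<Rightarrow> real) \<Rightarrow> ('a \<Rightarrow> 'a) \<Rightarrow> 'a \<Rightarrow> bool" where
  "weakly_quasi_convex \<gamma> f gf xs \<longleftrightarrow> 0 < \<gamma> \<and> \<gamma> \<le> 1 \<and> (\<forall>x. f xs \<le> f x) \<and>
     (\<forall>x. \<gamma> * (f x - f xs) \<le> gf x \<bullet> (x - xs))"

definition prox_function ::
  "('a::euclidean_space \<Rightarrow> real) \<Rightarrow> ('a \<Rightarrow> real) \<Rightarrow> ('a \<Rightarrow> 'a) \<Rightarrow> bool" where
  "prox_function nrm d gd \<longleftrightarrow> has_cont_gradient d gd \<and> convex_on UNIV d \<and>
     (\<forall>x y. d y - d x - gd x \<bullet> (y - x) \<ge> 1/2 * (nrm (y - x))\<^sup>2) \<and>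
     (\<exists>x. d x = 0) \<and> (\<forall>x. d x \<ge> 0)"

definition bregman :: "('a::real_inner \<Rightarrow> real) \<Rightarrow> ('a \<Rightarrow> 'a) \<Rightarrow> 'a \<Rightarrow> 'a \<Rightarrow> real" where
  "bregman d gd x z = d x - d z - gd z \<bullet> (x - z)"

definition is_sharp_map :: "('a::real_inner \<Rightarrow> real) \<Rightarrow> ('a \<Rightarrow> 'a) \<Rightarrow> bool" where
  "is_sharp_map nrm sharp \<longleftrightarrow>
     (\<forall>g. nrm (sharp g) \<le> 1 \<and> g \<bullet> sharp g = dual_norm nrm g)"

definition agm_psi ::
  "('a::real_inner \<Rightarrow> real) \<Rightarrow> ('a \<Rightarrow> 'a) \<Rightarrow> ('a \<Rightarrow> real) \<Rightarrow> ('a \<Rightarrow> 'a) \<Rightarrow> 'a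
    \<Rightarrow> (nat \<Rightarrow> real) \<Rightarrow> (nat \<Rightarrow> 'a) \<Rightarrow> nat \<Rightarrow> 'a \<Rightarrow> real" where
  "agm_psi d gd f gf x0 a y k z =
     bregman d gd z x0 + (\<Sum>i<k. a (Suc i) * (f (y i) + gf (y i) \<bullet> (z - y i)))"

text \<open>Steps 0..k-1 of AGMsDR (Option (a) if opt_a, else Option (b)) produce the
sequences x, v, y, beta, h, a, A. Choices among minimizers are arbitrary.\<close>
definition agmsdr_steps ::
  "bool \<Rightarrow> ('a::euclidean_space \<Rightarrow> real) \<Rightarrow> ('a \<Rightarrow> real) \<Rightarrow> ('a \<Rightarrow> 'a) \<Rightarrow> ('a \<Rightarrow> 'a)
    \<Rightarrow> ('a \<Rightarrow> real) \<Rightarrow> ('a \<Rightarrow> 'a) \<Rightarrow> real \<Rightarrow> nat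
    \<Rightarrow> (nat \<Rightarrow> 'a) \<Rightarrow> (nat \<Rightarrow> 'a) \<Rightarrow> (nat \<Rightarrow> 'a) \<Rightarrow> (nat \<Rightarrow> real) \<Rightarrow> (nat \<Rightarrow> real)
    \<Rightarrow> (nat \<Rightarrow> real) \<Rightarrow> (nat \<Rightarrow> real) \<Rightarrow> bool" where
  "agmsdr_steps opt_a nrm d gd sharp f gf L k x v y \<beta> h a A \<longleftrightarrow>
     A 0 = 0 \<and> v 0 = x 0 \<and>
     (\<forall>i<k.
        \<comment> \<open>step 1: exact line search on the segment [v_i, x_i]\<close>
        \<beta> i \<in> {0..1} \<and>
        (\<forall>b\<in>{0..1}. f (v i + \<beta> i *\<^sub>R (x i - v i)) \<le> f (v i + b *\<^sub>R (x i - v i))) \<and>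
        y i = v i + \<beta> i *\<^sub>R (x i - v i) \<and>
        \<comment> \<open>step 2\<close>
        (if opt_a then
           (\<forall>z. f (y i) + gf (y i) \<bullet> (x (Suc i) - y i) + L / 2 * (nrm (x (Suc i) - y i))\<^sup>2
                \<le> f (y i) + gf (y i) \<bullet> (z - y i) + L / 2 * (nrm (z - y i))\<^sup>2) \<and>
           a (Suc i) > 0 \<and> (a (Suc i))\<^sup>2 / (A i + a (Suc i)) = 1 / L
         else
           h (Suc i) \<ge> 0 \<and>
           (\<forall>t\<ge>0. f (y i - h (Suc i) *\<^sub>R sharp (gf (y i))) \<le> f (y i - t *\<^sub>R sharp (gf (y i)))) \<and>
           x (Suc i) = y i - h (Suc i) *\<^sub>R sharp (gf (y i)) \<and>
           A i + a (Suc i) \<noteq> 0 \<and>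
           f (y i) - (a (Suc i))\<^sup>2 / (2 * (A i + a (Suc i))) * (dual_norm nrm (gf (y i)))\<^sup>2
             = f (x (Suc i)) \<and>
           (\<forall>b. A i + b \<noteq> 0 \<and>
                f (y i) - b\<^sup>2 / (2 * (A i + b)) * (dual_norm nrm (gf (y i)))\<^sup>2 = f (x (Suc i))
                \<longrightarrow> b \<le> a (Suc i))) \<and>
        \<comment> \<open>step 3\<close>
        A (Suc i) = A i + a (Suc i) \<and>
        (\<forall>z. agm_psi d gd f gf (x 0) a y (Suc i) (v (Suc i))
               \<le> agm_psi d gd f gf (x 0) a y (Suc i) z))"

end

theory Submission
  imports Defs
begin

text \<open>The estimate functions keep the invariant \<open>A_k f(x_k) \<le> \<psi>_k(v_k) = min \<psi>_k\<close>.
Passing to \<open>\<psi>_{k+1}\<close>, the new linear term is absorbed by the strong convexity of \<open>\<psi>_k\<close> around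
its minimiser \<open>v_k\<close> at the price \<open>a_{k+1}\<^sup>2 \<parallel>\<nabla>f(y_k)\<parallel>\<^sub>*\<^sup>2 / 2\<close>; the exact line search gives
\<open>\<langle>\<nabla>f(y_k), v_k - y_k\<rangle> \<ge> 0\<close> and \<open>f(y_k) \<le> f(x_k)\<close>; and either gradient-type step makes
\<open>A_{k+1} f(x_{k+1}) \<le> A_{k+1} f(y_k) - a_{k+1}\<^sup>2 \<parallel>\<nabla>f(y_k)\<parallel>\<^sub>*\<^sup>2 / 2\<close>, which pays exactly that
price. Finally \<open>\<psi>_k(x_*)\<close> is bounded by weak quasi-convexity at the points \<open>y_i\<close>, using
\<open>f(y_i) \<le> f(x_0)\<close>; this is where the factor \<open>1 - \<gamma>\<close> enters.\<close>

lemma is_norm_zero: "is_norm nrm \<Longrightarrow> nrm 0 = 0"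
  by (simp add: is_norm_def)

lemma is_norm_minus: "is_norm nrm \<Longrightarrow> nrm (- x) = nrm x"
  unfolding is_norm_def by (metis abs_minus_cancel abs_one mult_1 scaleR_minus1_left)

lemma is_norm_diff_commute: "is_norm nrm \<Longrightarrow> nrm (x - y) = nrm (y - x)"
  by (metis minus_diff_eq is_norm_minus)

lemma is_norm_pos: "is_norm nrm \<Longrightarrow> x \<noteq> 0 \<Longrightarrow> nrm x > 0"
  unfolding is_norm_def by (metis less_eq_real_def)

lemma is_norm_sum:
  assumes n: "is_norm nrm" and "finite S"
  shows "nrm (sum g S) \<le> (\<Sum>i\<in>S. nrm (g i))"
  using \<open>finite S\<close>
proof (induction S rule: finite_induct)
  case empty
  then show ?case by (simp add: is_norm_zero[OF n])
next
  case (insert x F)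
  have "nrm (g x + sum g F) \<le> nrm (g x) + nrm (sum g F)"
    using n unfolding is_norm_def by blast
  with insert show ?case by simp
qed

lemma is_norm_le_norm:
  fixes nrm :: "'a::euclidean_space \<Rightarrow> real"
  assumes n: "is_norm nrm"
  shows "\<exists>B\<ge>0. \<forall>x. nrm x \<le> B * norm x"
proof (intro exI[of _ "\<Sum>b\<in>Basis. nrm b"] conjI allI)
  show "0 \<le> (\<Sum>b\<in>Basis. nrm b)" using n by (simp add: is_norm_def sum_nonneg)
  fix x :: 'a
  have "nrm x = nrm (\<Sum>b\<in>Basis. (x \<bullet> b) *\<^sub>R b)" by (simp add: euclidean_representation)
  also have "\<dots> \<le> (\<Sum>b\<in>Basis. nrm ((x \<bullet> b) *\<^sub>R b))" by (rule is_norm_sum[OF n]) simp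
  also have "\<dots> = (\<Sum>b\<in>Basis. \<bar>x \<bullet> b\<bar> * nrm b)" using n by (simp add: is_norm_def)
  also have "\<dots> \<le> (\<Sum>b\<in>Basis. norm x * nrm b)"
    by (rule sum_mono, rule mult_right_mono) (use n Basis_le_norm in \<open>auto simp: is_norm_def\<close>)
  also have "\<dots> = (\<Sum>b\<in>Basis. nrm b) * norm x" by (simp add: sum_distrib_left mult.commute)
  finally show "nrm x \<le> (\<Sum>b\<in>Basis. nrm b) * norm x" .
qed

lemma continuous_on_is_norm:
  fixes nrm :: "'a::euclidean_space \<Rightarrow> real"
  assumes n: "is_norm nrm"
  shows "continuous_on S nrm"
proof -
  obtain B where B: "B \<ge> 0" "\<And>x. nrm x \<le> B * norm x" using is_norm_le_norm[OF n] by blast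
  have tri: "nrm x \<le> nrm (x - y) + nrm y" for x y
    using n unfolding is_norm_def by (metis diff_add_cancel)
  have "\<bar>nrm x - nrm y\<bar> \<le> B * dist x y" for x y
    using tri[of x y] tri[of y x] is_norm_diff_commute[OF n, of x y] B(2)[of "x - y"]
    by (simp add: dist_norm abs_le_iff)
  then have "B-lipschitz_on S nrm"
    using B(1) by (auto intro: lipschitz_onI simp: dist_real_def)
  then show ?thesis by (rule lipschitz_on_continuous_on)
qed

lemma is_norm_ge_norm:
  fixes nrm :: "'a::euclidean_space \<Rightarrow> real"
  assumes n: "is_norm nrm"
  shows "\<exists>m>0. \<forall>x. m * norm x \<le> nrm x"
proof -
  obtain b :: 'a where "b \<in> Basis" using nonempty_Basis by blast
  then have "sphere (0::'a) 1 \<noteq> {}" by (auto intro!: exI[of _ b])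
  then obtain s where s: "s \<in> sphere (0::'a) 1" "\<And>y. y \<in> sphere 0 1 \<Longrightarrow> nrm s \<le> nrm y"
    using continuous_attains_inf[OF compact_sphere _ continuous_on_is_norm[OF n]] by blast
  have m: "nrm s > 0" using s(1) is_norm_pos[OF n, of s] by fastforce
  have "nrm s * norm x \<le> nrm x" for x :: 'a
  proof (cases "x = 0")
    case True
    then show ?thesis by (simp add: is_norm_zero[OF n])
  next
    case False
    have "nrm s \<le> nrm ((1 / norm x) *\<^sub>R x)" using s(2) False by simp
    also have "\<dots> = nrm x / norm x" using n by (simp add: is_norm_def)
    finally show ?thesis using False by (simp add: field_simps)
  qed
  with m show ?thesis by blast
qed

lemma bdd_above_dual_norm_set:
  fixes nrm :: "'a::euclidean_space \<Rightarrow> real"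
  assumes n: "is_norm nrm"
  shows "bdd_above {g \<bullet> x | x. nrm x \<le> 1}"
proof -
  obtain m where m: "m > 0" "\<And>x. m * norm x \<le> nrm x" using is_norm_ge_norm[OF n] by blast
  have "g \<bullet> x \<le> norm g / m" if "nrm x \<le> 1" for x
  proof -
    have "norm x \<le> 1 / m" using m(2)[of x] that m(1) by (simp add: field_simps)
    have "g \<bullet> x \<le> norm g * norm x" by (metis Cauchy_Schwarz_ineq2 abs_le_iff)
    also have "\<dots> \<le> norm g * (1 / m)" by (rule mult_left_mono) (fact, simp)
    finally show ?thesis by simp
  qed
  then show ?thesis unfolding bdd_above_def by blast
qed

lemma dual_norm_nonneg:
  fixes nrm :: "'a::euclidean_space \<Rightarrow> real"
  assumes n: "is_norm nrm"
  shows "0 \<le> dual_norm nrm u"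
proof -
  have "u \<bullet> 0 \<le> dual_norm nrm u" unfolding dual_norm_def
    by (rule cSup_upper[OF _ bdd_above_dual_norm_set[OF n]])
      (use is_norm_zero[OF n] in \<open>auto intro!: exI[of _ 0]\<close>)
  then show ?thesis by simp
qed

lemma inner_le_dual_norm:
  fixes nrm :: "'a::euclidean_space \<Rightarrow> real"
  assumes n: "is_norm nrm"
  shows "u \<bullet> w \<le> dual_norm nrm u * nrm w"
proof (cases "w = 0")
  case True
  then show ?thesis by (simp add: is_norm_zero[OF n])
next
  case False
  then have p: "nrm w > 0" by (rule is_norm_pos[OF n])
  have "nrm ((1 / nrm w) *\<^sub>R w) = 1" using n p False by (simp add: is_norm_def)
  then have "u \<bullet> ((1 / nrm w) *\<^sub>R w) \<le> dual_norm nrm u" unfolding dual_norm_def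
    by (intro cSup_upper[OF _ bdd_above_dual_norm_set[OF n]]) (auto intro!: exI[of _ "(1 / nrm w) *\<^sub>R w"])
  then show ?thesis using p by (simp add: field_simps)
qed

lemma dual_norm_pos:
  fixes nrm :: "'a::euclidean_space \<Rightarrow> real"
  assumes n: "is_norm nrm" and g: "g \<noteq> 0"
  shows "dual_norm nrm g > 0"
proof -
  have "0 < g \<bullet> g" using g by simp
  also have "\<dots> \<le> dual_norm nrm g * nrm g" by (rule inner_le_dual_norm[OF n])
  finally show ?thesis using is_norm_pos[OF n g] by (simp add: zero_less_mult_iff)
qed

lemma has_field_derivative_along_line:
  fixes f :: "'a::real_inner \<Rightarrow> real"
  assumes "(f has_derivative (\<lambda>h. g \<bullet> h)) (at (p + t *\<^sub>R u))"
  shows "((\<lambda>t. f (p + t *\<^sub>R u)) has_field_derivative g \<bullet> u) (at t)"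
proof -
  have "((\<lambda>t. p + t *\<^sub>R u) has_derivative (\<lambda>s. s *\<^sub>R u)) (at t)"
    by (auto intro!: derivative_eq_intros)
  from has_derivative_compose[OF this assms]
  have "((\<lambda>t. f (p + t *\<^sub>R u)) has_derivative (\<lambda>s. g \<bullet> (s *\<^sub>R u))) (at t)" .
  moreover have "(\<lambda>s. g \<bullet> (s *\<^sub>R u)) = (*) (g \<bullet> u)" by (auto simp: mult.commute)
  ultimately show ?thesis by (simp add: has_field_derivative_def)
qed

lemma L_smooth_quadratic_upper_bound:
  fixes nrm :: "'a::euclidean_space \<Rightarrow> real"
  assumes n: "is_norm nrm" and Ls: "L_smooth nrm L f gf"
  shows "f z \<le> f y + gf y \<bullet> (z - y) + L / 2 * (nrm (z - y))\<^sup>2"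
proof -
  define u where "u = z - y"
  have fd: "\<And>p. (f has_derivative (\<lambda>h. gf p \<bullet> h)) (at p)"
    using Ls unfolding L_smooth_def has_cont_gradient_def by blast
  have lip: "\<And>p q. dual_norm nrm (gf p - gf q) \<le> L * nrm (p - q)"
    using Ls unfolding L_smooth_def by blast
  define \<phi> where "\<phi> t = f (y + t *\<^sub>R u) - t * (gf y \<bullet> u) - L / 2 * t\<^sup>2 * (nrm u)\<^sup>2" for t
  have "\<phi> 1 \<le> \<phi> 0"
  proof (rule DERIV_nonpos_imp_nonincreasing[of 0 1])
    fix t :: real assume t: "0 \<le> t" "t \<le> 1"
    define p where "p = y + t *\<^sub>R u"
    have "(\<phi> has_field_derivative gf p \<bullet> u - gf y \<bullet> u - L / 2 * (2 * t) * (nrm u)\<^sup>2) (at t)"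
      unfolding \<phi>_def p_def
      by (rule derivative_eq_intros has_field_derivative_along_line[OF fd] refl)+ simp
    moreover have "gf p \<bullet> u - gf y \<bullet> u - L / 2 * (2 * t) * (nrm u)\<^sup>2 \<le> 0"
    proof -
      have "gf p \<bullet> u - gf y \<bullet> u = (gf p - gf y) \<bullet> u" by (simp add: inner_diff_left)
      also have "\<dots> \<le> dual_norm nrm (gf p - gf y) * nrm u" by (rule inner_le_dual_norm[OF n])
      also have "\<dots> \<le> L * nrm (p - y) * nrm u"
        by (rule mult_right_mono[OF lip]) (use n in \<open>simp add: is_norm_def\<close>)
      also have "nrm (p - y) = t * nrm u" using n t unfolding p_def is_norm_def by simp
      finally show ?thesis by (simp add: power2_eq_square mult.assoc)
    qed
    ultimately show "\<exists>D. (\<phi> has_field_derivative D) (at t) \<and> D \<le> 0" by blast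
  qed simp
  then show ?thesis unfolding \<phi>_def u_def by simp
qed

lemma exact_line_search_slope_nonneg:
  fixes f :: "'a::euclidean_space \<Rightarrow> real"
  assumes fd: "(f has_derivative (\<lambda>h. g \<bullet> h)) (at (v + \<beta> *\<^sub>R (x - v)))"
    and \<beta>: "\<beta> \<in> {0..1}"
    and min: "\<forall>b\<in>{0..1}. f (v + \<beta> *\<^sub>R (x - v)) \<le> f (v + b *\<^sub>R (x - v))"
  shows "0 \<le> g \<bullet> (v - (v + \<beta> *\<^sub>R (x - v)))"
proof (rule ccontr)
  assume "\<not> ?thesis"
  then have "\<beta> > 0" and slope: "g \<bullet> (x - v) > 0"
    using \<beta> by (auto simp: zero_less_mult_iff not_le)
  obtain e where e: "e > 0" "\<And>h. h > 0 \<Longrightarrow> h < e \<Longrightarrow>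
      f (v + (\<beta> - h) *\<^sub>R (x - v)) < f (v + \<beta> *\<^sub>R (x - v))"
    using DERIV_pos_inc_left[OF has_field_derivative_along_line[OF fd] slope] by blast
  define h where "h = min e \<beta> / 2"
  have "h > 0" "h < e" "h \<le> \<beta>" using e \<open>\<beta> > 0\<close> by (auto simp: h_def)
  then have "f (v + (\<beta> - h) *\<^sub>R (x - v)) < f (v + \<beta> *\<^sub>R (x - v))" and "\<beta> - h \<in> {0..1}"
    using e \<beta> by auto
  with min show False by fastforce
qed

lemma agm_psi_affine_plus_prox:
  "agm_psi d gd f gf x0 a y k z = d z + ((\<Sum>i<k. a (Suc i) *\<^sub>R gf (y i)) - gd x0) \<bullet> z
     + (- d x0 + gd x0 \<bullet> x0 + (\<Sum>i<k. a (Suc i) * (f (y i) - gf (y i) \<bullet> y i)))"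
proof -
  have "(\<Sum>i<k. a (Suc i) * (f (y i) + gf (y i) \<bullet> (z - y i)))
     = (\<Sum>i<k. a (Suc i) *\<^sub>R gf (y i)) \<bullet> z + (\<Sum>i<k. a (Suc i) * (f (y i) - gf (y i) \<bullet> y i))"
    by (simp add: inner_sum_left sum.distrib[symmetric] inner_diff_right algebra_simps)
  then show ?thesis unfolding agm_psi_def bregman_def by (simp add: inner_diff_left inner_diff_right)
qed

lemma agm_psi_strong_growth_at_min:
  assumes pf: "prox_function nrm d gd"
    and min: "\<forall>z. agm_psi d gd f gf x0 a y k v \<le> agm_psi d gd f gf x0 a y k z"
  shows "agm_psi d gd f gf x0 a y k v + 1/2 * (nrm (z - v))\<^sup>2 \<le> agm_psi d gd f gf x0 a y k z"
proof -
  define C where "C = (\<Sum>i<k. a (Suc i) *\<^sub>R gf (y i)) - gd x0"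
  define E where "E = - d x0 + gd x0 \<bullet> x0 + (\<Sum>i<k. a (Suc i) * (f (y i) - gf (y i) \<bullet> y i))"
  have \<psi>: "\<And>z. agm_psi d gd f gf x0 a y k z = d z + C \<bullet> z + E"
    unfolding C_def E_def by (rule agm_psi_affine_plus_prox)
  have dd: "(d has_derivative (\<lambda>h. gd v \<bullet> h)) (at v)"
    using pf unfolding prox_function_def has_cont_gradient_def by blast
  have "((\<lambda>z. d z + C \<bullet> z + E) has_derivative (\<lambda>h. gd v \<bullet> h + C \<bullet> h)) (at v)"
    by (rule derivative_eq_intros dd refl)+ simp
  then have "(\<lambda>h. gd v \<bullet> h + C \<bullet> h) = (\<lambda>h. 0)"
    by (intro differential_zero_maxmin[OF _ open_UNIV]) (use min \<psi> in auto)
  then have "(gd v + C) \<bullet> (gd v + C) = 0" by (metis inner_add_left)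
  then have C: "C = - gd v" by (simp add: eq_neg_iff_add_eq_0 add.commute)
  have "d z - d v - gd v \<bullet> (z - v) \<ge> 1/2 * (nrm (z - v))\<^sup>2"
    using pf unfolding prox_function_def by blast
  then show ?thesis unfolding \<psi> C by (simp add: inner_diff_right)
qed

text \<open>The term \<open>\<langle>g, w - v\<rangle>\<close> is absorbed by
the strong growth of \<open>\<psi>\<^sub>j\<close> via \<open>r\<^sup>2/2 - a D r \<ge> - a\<^sup>2 D\<^sup>2/2\<close>.\<close>
lemma agm_psi_Suc_lower_bound:
  fixes nrm :: "'a::euclidean_space \<Rightarrow> real"
  assumes n: "is_norm nrm" and pf: "prox_function nrm d gd"
    and min: "\<forall>z. agm_psi d gd f gf x0 a y j v \<le> agm_psi d gd f gf x0 a y j z"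
    and est: "A * f x \<le> agm_psi d gd f gf x0 a y j v"
    and A0: "0 \<le> A" and a0: "0 \<le> a (Suc j)"
    and slope: "0 \<le> gf (y j) \<bullet> (v - y j)" and fyx: "f (y j) \<le> f x"
  shows "(A + a (Suc j)) * f (y j) - (a (Suc j))\<^sup>2 / 2 * (dual_norm nrm (gf (y j)))\<^sup>2
           \<le> agm_psi d gd f gf x0 a y (Suc j) w"
proof -
  define g where "g = gf (y j)"
  define D where "D = dual_norm nrm g"
  define r where "r = nrm (w - v)"
  have "g \<bullet> (v - w) \<le> D * r"
    unfolding D_def r_def using inner_le_dual_norm[OF n] is_norm_diff_commute[OF n] by metis
  then have "a (Suc j) * (g \<bullet> (v - w)) \<le> a (Suc j) * (D * r)" using a0 by (rule mult_left_mono)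
  then have "a (Suc j) * (g \<bullet> (w - v)) \<ge> - (a (Suc j) * (D * r))"
    by (simp add: inner_diff_right right_diff_distrib)
  moreover have "0 \<le> (r - a (Suc j) * D)\<^sup>2" by simp
  ultimately have absorb: "1/2 * r\<^sup>2 + a (Suc j) * (g \<bullet> (w - v)) \<ge> - ((a (Suc j))\<^sup>2 / 2 * D\<^sup>2)"
    by (simp add: power2_eq_square algebra_simps)
  have growth: "agm_psi d gd f gf x0 a y j v + 1/2 * r\<^sup>2 \<le> agm_psi d gd f gf x0 a y j w"
    unfolding r_def by (rule agm_psi_strong_growth_at_min[OF pf min])
  have "agm_psi d gd f gf x0 a y (Suc j) w
      = agm_psi d gd f gf x0 a y j w + a (Suc j) * (f (y j) + g \<bullet> (w - v) + g \<bullet> (v - y j))"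
    unfolding agm_psi_def g_def by (simp add: inner_diff_right)
  moreover have "0 \<le> a (Suc j) * (g \<bullet> (v - y j))" using slope a0 unfolding g_def by simp
  moreover have "A * f (y j) \<le> A * f x" using fyx A0 by (simp add: mult_left_mono)
  ultimately show ?thesis
    using absorb growth est unfolding g_def[symmetric] D_def[symmetric]
    by (simp add: algebra_simps)
qed

lemma prox_gradient_step_decrease:
  fixes nrm :: "'a::euclidean_space \<Rightarrow> real"
  assumes n: "is_norm nrm" and Ls: "L_smooth nrm L f gf" and sh: "is_sharp_map nrm sharp"
    and min: "\<forall>z. f y + gf y \<bullet> (x' - y) + L / 2 * (nrm (x' - y))\<^sup>2
                \<le> f y + gf y \<bullet> (z - y) + L / 2 * (nrm (z - y))\<^sup>2"
  shows "f x' \<le> f y - (dual_norm nrm (gf y))\<^sup>2 / (2 * L)"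
proof -
  define D where "D = dual_norm nrm (gf y)"
  define s where "s = sharp (gf y)"
  have L: "L > 0" using Ls unfolding L_smooth_def by blast
  have s1: "nrm s \<le> 1" and s2: "gf y \<bullet> s = D"
    using sh unfolding is_sharp_map_def s_def D_def by auto
  have s0: "nrm s \<ge> 0" using n unfolding is_norm_def by blast
  have D0: "D \<ge> 0" unfolding D_def by (rule dual_norm_nonneg[OF n])
  define z where "z = y - (D / L) *\<^sub>R s"
  have "nrm (z - y) = D / L * nrm s"
    using n D0 L unfolding z_def is_norm_def by (simp flip: scaleR_minus_left)
  also have "\<dots> \<le> D / L" using s1 s0 D0 L by (intro mult_left_le) auto
  finally have "(nrm (z - y))\<^sup>2 \<le> (D / L)\<^sup>2"
    using n unfolding is_norm_def by (intro power_mono) auto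
  then have "L / 2 * (nrm (z - y))\<^sup>2 \<le> L / 2 * (D / L)\<^sup>2" using L by simp
  moreover have "gf y \<bullet> (z - y) = - (D / L) * D" unfolding z_def using s2 by simp
  moreover have "f x' \<le> f y + gf y \<bullet> (z - y) + L / 2 * (nrm (z - y))\<^sup>2"
    using L_smooth_quadratic_upper_bound[OF n Ls, of x' y] min by (meson order_trans)
  ultimately have "f x' \<le> f y - (D / L) * D + L / 2 * (D / L)\<^sup>2" by simp
  also have "\<dots> = f y - D\<^sup>2 / (2 * L)" using L by (simp add: field_simps power2_eq_square)
  finally show ?thesis unfolding D_def .
qed

text \<open>In option (b) \<open>a\<close> is the larger root of \<open>a\<^sup>2 D\<^sup>2 = 2 (f(y) - f(x')) (A + a)\<close>; since the
roots sum to \<open>2 (f(y) - f(x'))/D\<^sup>2 \<ge> 0\<close>, a negative root cannot be the larger one.\<close>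
lemma largest_root_step_decrease:
  fixes D :: real
  assumes D: "D > 0" and decr: "fx' \<le> fy" and A0: "A \<ge> 0"
    and nz: "A + a \<noteq> 0" and eq: "fy - a\<^sup>2 / (2 * (A + a)) * D\<^sup>2 = fx'"
    and largest: "\<forall>b. A + b \<noteq> 0 \<and> fy - b\<^sup>2 / (2 * (A + b)) * D\<^sup>2 = fx' \<longrightarrow> b \<le> a"
  shows "a \<ge> 0" and "A + a > 0" and "(A + a) * fx' = (A + a) * fy - a\<^sup>2 / 2 * D\<^sup>2"
proof -
  define \<kappa> where "\<kappa> = 2 * (fy - fx') / D\<^sup>2"
  have \<kappa>0: "\<kappa> \<ge> 0" using decr D unfolding \<kappa>_def by simp
  have root: "fy - b\<^sup>2 / (2 * (A + b)) * D\<^sup>2 = fx' \<longleftrightarrow> b\<^sup>2 = \<kappa> * (A + b)" if "A + b \<noteq> 0" for b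
    using that D unfolding \<kappa>_def by (auto simp: field_simps)
  show a0: "a \<ge> 0"
  proof (rule ccontr)
    assume "\<not> a \<ge> 0"
    then have "\<kappa> - a > 0" using \<kappa>0 by simp
    moreover have "(\<kappa> - a)\<^sup>2 = \<kappa> * (A + (\<kappa> - a))"
      using root[OF nz] eq by (simp add: power2_eq_square algebra_simps)
    ultimately have "\<kappa> - a \<le> a" using largest root A0 by (metis add_nonneg_pos less_irrefl)
    with \<open>\<kappa> - a > 0\<close> \<open>\<not> a \<ge> 0\<close> show False by simp
  qed
  show "A + a > 0" using a0 A0 nz by simp
  then show "(A + a) * fx' = (A + a) * fy - a\<^sup>2 / 2 * D\<^sup>2" using eq[symmetric] by (simp add: field_simps)
qed

lemma agmsdr_line_search:
  fixes nrm :: "'a::euclidean_space \<Rightarrow> real"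
  assumes Ls: "L_smooth nrm L f gf"
    and st: "agmsdr_steps opt_a nrm d gd sharp f gf L k x v y \<beta> h a A" and i: "i < k"
  shows "f (y i) \<le> f (x i)" and "0 \<le> gf (y i) \<bullet> (v i - y i)"
proof -
  have \<beta>: "\<beta> i \<in> {0..1}"
    and min: "\<forall>b\<in>{0..1}. f (v i + \<beta> i *\<^sub>R (x i - v i)) \<le> f (v i + b *\<^sub>R (x i - v i))"
    and y: "y i = v i + \<beta> i *\<^sub>R (x i - v i)"
    using st i unfolding agmsdr_steps_def by blast+
  show "f (y i) \<le> f (x i)" using bspec[OF min, of 1] y by simp
  have "(f has_derivative (\<lambda>h. gf (y i) \<bullet> h)) (at (y i))"
    using Ls unfolding L_smooth_def has_cont_gradient_def by blast
  then show "0 \<le> gf (y i) \<bullet> (v i - y i)"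
    using exact_line_search_slope_nonneg[OF _ \<beta> min] y by simp
qed

lemma agmsdr_step_decrease:
  fixes nrm :: "'a::euclidean_space \<Rightarrow> real"
  assumes n: "is_norm nrm" and Ls: "L_smooth nrm L f gf" and sh: "is_sharp_map nrm sharp"
    and st: "agmsdr_steps opt_a nrm d gd sharp f gf L k x v y \<beta> h a A" and i: "i < k"
    and g: "gf (y i) \<noteq> 0" and A0: "0 \<le> A i"
  shows "0 \<le> a (Suc i) \<and> 0 < A (Suc i) \<and>
    A (Suc i) * f (x (Suc i)) \<le> A (Suc i) * f (y i) - (a (Suc i))\<^sup>2 / 2 * (dual_norm nrm (gf (y i)))\<^sup>2"
proof -
  have A: "A (Suc i) = A i + a (Suc i)" using st i unfolding agmsdr_steps_def by blast
  have L: "L > 0" using Ls unfolding L_smooth_def by blast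
  show ?thesis
  proof (cases opt_a)
    case True
    then have min: "\<forall>z. f (y i) + gf (y i) \<bullet> (x (Suc i) - y i) + L / 2 * (nrm (x (Suc i) - y i))\<^sup>2
                \<le> f (y i) + gf (y i) \<bullet> (z - y i) + L / 2 * (nrm (z - y i))\<^sup>2"
      and a: "a (Suc i) > 0" and root: "(a (Suc i))\<^sup>2 / (A i + a (Suc i)) = 1 / L"
      using st i unfolding agmsdr_steps_def by auto
    have pos: "A (Suc i) > 0" using A a A0 by simp
    have "A (Suc i) * f (x (Suc i))
        \<le> A (Suc i) * (f (y i) - (dual_norm nrm (gf (y i)))\<^sup>2 / (2 * L))"
      using prox_gradient_step_decrease[OF n Ls sh min] pos by simp
    also have "\<dots> = A (Suc i) * f (y i) - (a (Suc i))\<^sup>2 / 2 * (dual_norm nrm (gf (y i)))\<^sup>2"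
      using root pos L A by (simp add: field_simps)
    finally show ?thesis using a pos by simp
  next
    case False
    then have min: "\<forall>t\<ge>0. f (x (Suc i)) \<le> f (y i - t *\<^sub>R sharp (gf (y i)))"
      and step: "A i + a (Suc i) \<noteq> 0"
        "f (y i) - (a (Suc i))\<^sup>2 / (2 * (A i + a (Suc i))) * (dual_norm nrm (gf (y i)))\<^sup>2
           = f (x (Suc i))"
        "\<forall>b. A i + b \<noteq> 0 \<and>
           f (y i) - b\<^sup>2 / (2 * (A i + b)) * (dual_norm nrm (gf (y i)))\<^sup>2 = f (x (Suc i))
           \<longrightarrow> b \<le> a (Suc i)"
      using st i unfolding agmsdr_steps_def by auto
    have "f (x (Suc i)) \<le> f (y i)" using min[rule_format, of 0] by simp
    from largest_root_step_decrease[OF dual_norm_pos[OF n g] this A0 step]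
    show ?thesis using A by simp
  qed
qed

lemma agmsdr_v_minimizes_psi:
  assumes pf: "prox_function nrm d gd"
    and st: "agmsdr_steps opt_a nrm d gd sharp f gf L k x v y \<beta> h a A" and j: "j \<le> k"
  shows "agm_psi d gd f gf (x 0) a y j (v j) \<le> agm_psi d gd f gf (x 0) a y j z"
proof (cases j)
  case 0
  have "d z - d (x 0) - gd (x 0) \<bullet> (z - x 0) \<ge> 1/2 * (nrm (z - x 0))\<^sup>2"
    using pf unfolding prox_function_def by blast
  then have "0 \<le> d z - d (x 0) - gd (x 0) \<bullet> (z - x 0)"
    using zero_le_power2[of "nrm (z - x 0)"] by linarith
  moreover have "v 0 = x 0" using st unfolding agmsdr_steps_def by blast
  ultimately show ?thesis using 0 unfolding agm_psi_def bregman_def by simp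
next
  case (Suc i)
  then show ?thesis using st j unfolding agmsdr_steps_def by auto
qed

lemma agmsdr_estimate_invariant:
  fixes nrm :: "'a::euclidean_space \<Rightarrow> real"
  assumes n: "is_norm nrm" and pf: "prox_function nrm d gd" and sh: "is_sharp_map nrm sharp"
    and Ls: "L_smooth nrm L f gf"
    and st: "agmsdr_steps opt_a nrm d gd sharp f gf L k x v y \<beta> h a A"
    and g: "\<forall>i<k. gf (y i) \<noteq> 0" and j: "j \<le> k"
  shows "0 \<le> A j \<and> f (x j) \<le> f (x 0) \<and> A j * f (x j) \<le> agm_psi d gd f gf (x 0) a y j (v j)"
  using j
proof (induction j)
  case 0
  have "A 0 = 0" "v 0 = x 0" using st unfolding agmsdr_steps_def by auto
  then show ?case by (simp add: agm_psi_def bregman_def)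
next
  case (Suc j)
  then have j: "j < k" by simp
  with Suc.IH have A0: "0 \<le> A j" and fx: "f (x j) \<le> f (x 0)"
    and est: "A j * f (x j) \<le> agm_psi d gd f gf (x 0) a y j (v j)" by auto
  obtain a0: "0 \<le> a (Suc j)" and pos: "0 < A (Suc j)" and decr:
      "A (Suc j) * f (x (Suc j))
         \<le> A (Suc j) * f (y j) - (a (Suc j))\<^sup>2 / 2 * (dual_norm nrm (gf (y j)))\<^sup>2"
    using agmsdr_step_decrease[OF n Ls sh st j] g j A0 by blast
  have A: "A (Suc j) = A j + a (Suc j)" using st j unfolding agmsdr_steps_def by blast
  note line = agmsdr_line_search[OF Ls st j]
  have "A (Suc j) * f (x (Suc j)) \<le> A (Suc j) * f (y j)"
    using decr by (smt (verit) divide_nonneg_nonneg zero_le_power2 mult_nonneg_nonneg)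
  then have "f (x (Suc j)) \<le> f (x 0)" using pos line(1) fx by simp
  moreover have "A (Suc j) * f (x (Suc j)) \<le> agm_psi d gd f gf (x 0) a y (Suc j) (v (Suc j))"
  proof -
    have "\<forall>z. agm_psi d gd f gf (x 0) a y j (v j) \<le> agm_psi d gd f gf (x 0) a y j z"
      using agmsdr_v_minimizes_psi[OF pf st] j by simp
    from agm_psi_Suc_lower_bound[OF n pf this est A0 a0 line(2,1)]
    show ?thesis using decr unfolding A by (meson order_trans)
  qed
  ultimately show ?case using pos by simp
qed

lemma agm_psi_at_weakly_quasi_convex_min:
  assumes wq: "weakly_quasi_convex \<gamma> f gf xs"
    and steps: "\<forall>i<k. 0 \<le> a (Suc i) \<and> f (y i) \<le> f x0"
  shows "agm_psi d gd f gf x0 a y k xs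
           \<le> bregman d gd xs x0 + (\<Sum>i<k. a (Suc i)) * ((1 - \<gamma>) * f x0 + \<gamma> * f xs)"
proof -
  have \<gamma>: "\<gamma> \<le> 1" and wqc: "\<And>z. \<gamma> * (f z - f xs) \<le> gf z \<bullet> (z - xs)"
    using wq unfolding weakly_quasi_convex_def by auto
  have "f (y i) + gf (y i) \<bullet> (xs - y i) \<le> (1 - \<gamma>) * f x0 + \<gamma> * f xs" if "i < k" for i
  proof -
    have "f (y i) + gf (y i) \<bullet> (xs - y i) \<le> (1 - \<gamma>) * f (y i) + \<gamma> * f xs"
      using wqc[of "y i"] by (simp add: inner_diff_right algebra_simps)
    also have "\<dots> \<le> (1 - \<gamma>) * f x0 + \<gamma> * f xs"
      using steps that \<gamma> by (simp add: mult_left_mono)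
    finally show ?thesis .
  qed
  then have "(\<Sum>i<k. a (Suc i) * (f (y i) + gf (y i) \<bullet> (xs - y i)))
      \<le> (\<Sum>i<k. a (Suc i) * ((1 - \<gamma>) * f x0 + \<gamma> * f xs))"
    using steps by (intro sum_mono mult_left_mono) auto
  then show ?thesis unfolding agm_psi_def by (simp add: sum_distrib_right)
qed

lemma agmsdr_A_eq_sum:
  assumes st: "agmsdr_steps opt_a nrm d gd sharp f gf L k x v y \<beta> h a A" and j: "j \<le> k"
  shows "A j = (\<Sum>i<j. a (Suc i))"
  using j by (induction j) (use st in \<open>auto simp: agmsdr_steps_def\<close>)

theorem mainTheorem3:
  fixes nrm :: "'a::euclidean_space \<Rightarrow> real"
    and d :: "'a \<Rightarrow> real" and gd :: "'a \<Rightarrow> 'a"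
    and sharp :: "'a \<Rightarrow> 'a"
    and f :: "'a \<Rightarrow> real" and gf :: "'a \<Rightarrow> 'a"
    and L \<gamma> :: real and xs :: 'a and opt_a :: bool and k :: nat
    and x v y :: "nat \<Rightarrow> 'a" and \<beta> h a A :: "nat \<Rightarrow> real"
  assumes "is_norm nrm"
    and "prox_function nrm d gd"
    and "is_sharp_map nrm sharp"
    and "L_smooth nrm L f gf"
    and "weakly_quasi_convex \<gamma> f gf xs"
    and "agmsdr_steps opt_a nrm d gd sharp f gf L k x v y \<beta> h a A"
    and "\<forall>i<k. gf (y i) \<noteq> 0"
  shows "A k * (f (x k) - f xs) \<le> (1 - \<gamma>) * A k * (f (x 0) - f xs) + bregman d gd xs (x 0)"
proof -
  note invariant = agmsdr_estimate_invariant[OF assms(1-4,6,7)]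
  have "\<forall>i<k. 0 \<le> a (Suc i) \<and> f (y i) \<le> f (x 0)"
    using invariant agmsdr_step_decrease[OF assms(1,4,3,6)] agmsdr_line_search(1)[OF assms(4,6)]
      assms(7) by (meson less_imp_le order_trans)
  then have "agm_psi d gd f gf (x 0) a y k xs
      \<le> bregman d gd xs (x 0) + A k * ((1 - \<gamma>) * f (x 0) + \<gamma> * f xs)"
    using agm_psi_at_weakly_quasi_convex_min[OF assms(5)] agmsdr_A_eq_sum[OF assms(6)] by simp
  moreover have "A k * f (x k) \<le> agm_psi d gd f gf (x 0) a y k xs"
    using invariant[of k] agmsdr_v_minimizes_psi[OF assms(2,6), of k] by (meson order_refl order_trans)
  ultimately show ?thesis by (simp add: algebra_simps)
qed

end
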